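(* Let $\lambda$ be a positive integer, let $\rho>1$, and let $f$ be analytic inside and on the Bernstein ellipse $\mathcal{E}_\rho$. Then for each $n\ge0$, \[ a_n^{\lambda}=\frac{c_{n,\lambda}}{i\pi}\sum_{k=0}^{\lambda-1}\frac{(n+1)_k(1-\lambda)_k}{(n+\lambda+1)_k\,k!}\oint_{\mathcal{E}_\rho}\frac{f(z)}{(z\pm\sqrt{z^2-1})^{n+2k+1}}\,dz, \] where the sign is chosen so that $|z\pm\sqrt{z^2-1}|>1$, the contour is traversed counterclockwise, and $c_{n,\lambda}=\Gamma(\lambda)\Gamma(n+1)/\Gamma(n+\lambda)$.
   Context: $C_n^{(\lambda)}$ denotes the Gegenbauer polynomial of degree $n$ normalized by $C_n^{(\lambda)}(1)=\Gamma(n+2\lambda)/(n!\,\Gamma(2\lambda))$, orthogonal on $[-1,1]$ with weight $(1-x^2)^{\lambda-1/2}$, with $h_n^{(\lambda)}=\int_{-1}^1(1-x^2)^{\lambda-1/2}(C_n^{(\lambda)})^2dx=\frac{2^{1-2\lambda}\pi}{\Gamma(\lambda)^2}\frac{\Gamma(n+2\lambda)}{\Gamma(n+1)(n+\lambda)}$. The Gegenbauer coefficients of $f$ are $a_n^{\lambda}=\frac{1}{h_n^{(\lambda)}}\int_{-1}^1(1-x^2)^{\lambda-1/2}f(x)C_n^{(\lambda)}(x)\,dx$. $\mathcal{E}_\rho=\{\tfrac12(\rho e^{i\theta}+\rho^{-1}e^{-i\theta}):0\le\theta\le2\pi\}$. $(z)_k$ is the Pochhammer symbol. *)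

theory Defs
  imports "HOL-Complex_Analysis.Complex_Analysis"
begin

text \<open>Gegenbauer polynomial C_n^(lam)(x), standard normalisation
  C_n^(lam)(x) = sum_{k=0}^{floor(n/2)} (-1)^k (lam)_{n-k} / (k! (n-2k)!) (2x)^{n-2k},
  so that C_n^(lam)(1) = Gamma(n+2 lam)/(n! Gamma(2 lam)).\<close>
definition gegenbauer :: "nat \<Rightarrow> real \<Rightarrow> real \<Rightarrow> real" where
  "gegenbauer n lam x =
     (\<Sum>k\<le>n div 2. (-1)^k * pochhammer lam (n - k) / (fact k * fact (n - 2*k)) * (2*x)^(n - 2*k))"

definition gegenbauer_weight :: "real \<Rightarrow> real \<Rightarrow> real" where
  "gegenbauer_weight lam x = (1 - x^2) powr (lam - 1/2)"

definition gegenbauer_h :: "nat \<Rightarrow> real \<Rightarrow> real" where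
  "gegenbauer_h n lam = integral {-1..1} (\<lambda>x. gegenbauer_weight lam x * (gegenbauer n lam x)^2)"

definition gegenbauer_coeff :: "nat \<Rightarrow> real \<Rightarrow> (complex \<Rightarrow> complex) \<Rightarrow> complex" where
  "gegenbauer_coeff n lam f =
     integral {-1..1} (\<lambda>x. complex_of_real (gegenbauer_weight lam x * gegenbauer n lam x) * f (complex_of_real x))
     / complex_of_real (gegenbauer_h n lam)"

definition bernstein_ellipse :: "real \<Rightarrow> real \<Rightarrow> complex" where
  "bernstein_ellipse rho t =
     (complex_of_real rho * cis (2*pi*t) + complex_of_real (inverse rho) * cis (-(2*pi*t))) / 2"

text \<open>Closed region bounded by E_rho (foci +-1, major semi-axis (rho+1/rho)/2).\<close>
definition bernstein_region :: "real \<Rightarrow> complex set" where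
  "bernstein_region rho = {z. cmod (z - 1) + cmod (z + 1) \<le> rho + inverse rho}"

definition joukowski_inv :: "complex \<Rightarrow> complex" where
  "joukowski_inv z = (if cmod (z + csqrt (z^2 - 1)) > 1 then z + csqrt (z^2 - 1)
                      else z - csqrt (z^2 - 1))"

end

theory Submission
  imports Defs
begin

(* Under x = cos t the weight (1 - x^2) powr (lam - 1/2) becomes sin t ^ (2 lam - 1), and for a
   positive integer lam
     sin t ^ (2 lam - 1) * C_n(cos t) = K_n * (SUM k < lam. c_(n,k) * sin ((n + 2k + 1) t))
   with c_(n,k) the coefficients of the statement: for n = 0 this is the Fourier expansion of an odd
   power of sin t, and it propagates in n because both sides satisfy the same three-term recurrence.
   Hence a_n and h_n become integrals of sin t * sin ((n + 2k + 1) t) against f (cos t) and C_n (cos t);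
   the latter are computed by orthogonality of the sines, and K_n cancels.
   On the contour side, w -> (w + 1/w)/2 maps the circle |w| = rho onto the Bernstein ellipse, with
   z +- sqrt (z^2 - 1) as inverse. Shrinking the circle to |w| = 1 and folding [0, 2 pi] onto [0, pi]
   turns the contour integral of f z / (z +- sqrt (z^2 - 1)) ^ m into
   2 i * integral over [0, pi] of sin t * sin (m t) * f (cos t). *)

section \<open>The three-term recurrence of the Gegenbauer polynomials\<close>

definition gegenbauer_power_coeff :: "real \<Rightarrow> nat \<Rightarrow> nat \<Rightarrow> real" where
  "gegenbauer_power_coeff L n k =
     (if 2*k \<le> n then (-1)^k * pochhammer L (n - k) / (fact k * fact (n - 2*k)) else 0)"

lemma gegenbauer_eq_sum_atMost:
  "gegenbauer n L x = (\<Sum>k\<le>n. gegenbauer_power_coeff L n k * (2*x)^(n - 2*k))"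
  unfolding gegenbauer_def gegenbauer_power_coeff_def
  by (rule sum.mono_neutral_cong_left) auto

lemma gegenbauer_power_coeff_rec_0:
  "real (n+1) * gegenbauer_power_coeff L (n+1) 0 = (real n + L) * gegenbauer_power_coeff L n 0"
proof -
  have "gegenbauer_power_coeff L (n+1) 0 = pochhammer L n * (L + real n) / (real (n+1) * fact n)"
    by (simp add: gegenbauer_power_coeff_def pochhammer_Suc fact_Suc)
  then show ?thesis
    by (simp add: gegenbauer_power_coeff_def field_simps del: of_nat_Suc)
qed

lemma gegenbauer_power_coeff_rec_top:
  assumes "n = 2*j + 1"
  shows "real (n+1) * gegenbauer_power_coeff L (n+1) (Suc j)
       = - (real n + 2*L - 1) * gegenbauer_power_coeff L (n-1) j"
proof -
  have a: "gegenbauer_power_coeff L (n+1) (Suc j)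
      = (-1)^(j+1) * (pochhammer L j * (L + real j)) / (real (j+1) * fact j)"
    using assms by (simp add: gegenbauer_power_coeff_def pochhammer_Suc fact_Suc)
  have c: "gegenbauer_power_coeff L (n-1) j = (-1)^j * pochhammer L j / fact j"
    using assms by (simp add: gegenbauer_power_coeff_def)
  have d: "real (n+1) = 2 * real (j+1)" "real n = 2 * real j + 1"
    using assms by auto
  show ?thesis
    unfolding a c d by (simp add: divide_simps algebra_simps del: of_nat_Suc)
qed

lemma gegenbauer_power_coeff_rec_Suc:
  assumes "n = r + 2 * Suc j"
  shows "real (n+1) * gegenbauer_power_coeff L (n+1) (Suc j)
       = (real n + L) * gegenbauer_power_coeff L n (Suc j)
         - (real n + 2*L - 1) * gegenbauer_power_coeff L (n-1) j"
proof -
  define Y where "Y = (-1)^j * pochhammer L (r+j+1) / (fact j * fact r)"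
  have "n + 1 - Suc j = Suc (r + j + 1)" "n + 1 - 2 * Suc j = Suc r"
    "n - Suc j = r + j + 1" "n - 2 * Suc j = r"
    "n - 1 - j = r + j + 1" "n - 1 - 2*j = Suc r"
    using assms by auto
  then have a: "gegenbauer_power_coeff L (n+1) (Suc j)
        = - Y * (L + real r + real j + 1) / ((real j + 1) * (real r + 1))"
    and b: "gegenbauer_power_coeff L n (Suc j) = - Y / (real j + 1)"
    and c: "gegenbauer_power_coeff L (n-1) j = Y / (real r + 1)"
    using assms unfolding Y_def gegenbauer_power_coeff_def
    by (simp_all add: pochhammer_Suc fact_Suc) (simp_all add: field_simps)
  have "real j + 1 \<noteq> 0" "real r + 1 \<noteq> 0" "real n = real r + 2 * real j + 2"
    using assms by simp_all
  then show ?thesis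
    unfolding a b c by (simp add: field_simps)
qed

lemma gegenbauer_power_coeff_rec:
  assumes "n \<ge> 1"
  shows "real (n+1) * gegenbauer_power_coeff L (n+1) k = (real n + L) * gegenbauer_power_coeff L n k
          - (real n + 2*L - 1) * (if k = 0 then 0 else gegenbauer_power_coeff L (n-1) (k-1))"
proof (cases k)
  case 0
  then show ?thesis using gegenbauer_power_coeff_rec_0[of n L] by simp
next
  case (Suc j)
  consider "n + 1 < 2*k" | "n = 2*j + 1" | r where "n = r + 2 * Suc j"
  proof (cases "2*k \<le> n")
    case True
    then have "n = (n - 2*k) + 2 * Suc j" using Suc by simp
    then show ?thesis using that(3) by blast
  next
    case False
    then show ?thesis
      using that(1,2) Suc by (cases "n + 1 < 2*k") simp_all
  qed
  then show ?thesis
  proof cases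
    case 1
    then show ?thesis using assms Suc by (auto simp: gegenbauer_power_coeff_def)
  next
    case 2
    then show ?thesis using Suc gegenbauer_power_coeff_rec_top[OF 2, of L]
      by (simp add: gegenbauer_power_coeff_def divide_simps algebra_simps)
  next
    case 3
    then show ?thesis using Suc gegenbauer_power_coeff_rec_Suc[OF 3, of L] by simp
  qed
qed

lemma gegenbauer_rec:
  assumes "n \<ge> 1"
  shows "real (n+1) * gegenbauer (n+1) L x
     = 2 * (real n + L) * x * gegenbauer n L x - (real n + 2*L - 1) * gegenbauer (n-1) L x"
proof -
  define y where "y = 2*x"
  let ?c = "gegenbauer_power_coeff L"
  obtain m where m: "n = Suc m" using assms by (cases n) auto
  have shift_up: "y * gegenbauer n L x = (\<Sum>k\<le>n+1. ?c n k * y^(n+1-2*k))"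
  proof -
    have "y * gegenbauer n L x = (\<Sum>k\<le>n. ?c n k * y^(n+1-2*k))"
      unfolding gegenbauer_eq_sum_atMost y_def[symmetric] sum_distrib_left
      by (intro sum.cong refl) (auto simp: gegenbauer_power_coeff_def Suc_diff_le)
    also have "\<dots> = (\<Sum>k\<le>n+1. ?c n k * y^(n+1-2*k))"
      by (simp add: gegenbauer_power_coeff_def)
    finally show ?thesis .
  qed
  have shift_down: "gegenbauer (n-1) L x
      = (\<Sum>k\<le>n+1. (if k = 0 then 0 else ?c (n-1) (k-1)) * y^(n+1-2*k))"
  proof -
    have "(\<Sum>k\<le>n+1. (if k = 0 then 0 else ?c (n-1) (k-1)) * y^(n+1-2*k))
        = (\<Sum>k\<le>Suc m. ?c m k * y^(m - 2*k))"
      unfolding sum.atMost_Suc_shift[where n = "n"] Suc_eq_plus1[symmetric] by (simp add: m)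
    also have "\<dots> = (\<Sum>k\<le>m. ?c m k * y^(m - 2*k))"
      by (simp add: gegenbauer_power_coeff_def)
    finally show ?thesis unfolding gegenbauer_eq_sum_atMost y_def m by simp
  qed
  have "real (n+1) * gegenbauer (n+1) L x
      = (\<Sum>k\<le>n+1. ((real n + L) * ?c n k
          - (real n + 2*L - 1) * (if k = 0 then 0 else ?c (n-1) (k-1))) * y^(n+1-2*k))"
    unfolding gegenbauer_eq_sum_atMost y_def[symmetric] sum_distrib_left
    by (intro sum.cong refl) (simp add: gegenbauer_power_coeff_rec[OF assms, symmetric])
  also have "\<dots> = (real n + L) * (y * gegenbauer n L x) - (real n + 2*L - 1) * gegenbauer (n-1) L x"
    unfolding shift_up shift_down sum_distrib_left sum_subtractf[symmetric]
    by (intro sum.cong refl) (simp add: algebra_simps)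
  finally show ?thesis by (simp add: y_def algebra_simps)
qed

section \<open>A sum of sines and its recurrence\<close>

definition sin_sum_coeff :: "real \<Rightarrow> real \<Rightarrow> nat \<Rightarrow> real" where
  "sin_sum_coeff L x k =
     pochhammer (x + 1) k * pochhammer (1 - L) k / (pochhammer (x + L + 1) k * fact k)"

(* The degree x is real so that the recurrence in x can step down to x = -1, where the sum vanishes. *)
definition sin_sum :: "nat \<Rightarrow> real \<Rightarrow> real \<Rightarrow> real" where
  "sin_sum l x t = (\<Sum>k<l. sin_sum_coeff (real l) x k * sin ((x + 2 * real k + 1) * t))"

lemma sin_sum_coeff_0 [simp]: "sin_sum_coeff L x 0 = 1"
  by (simp add: sin_sum_coeff_def)

lemma sin_sum_coeff_minus_one_Suc: "sin_sum_coeff L (-1) (Suc j) = 0"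
  by (simp add: sin_sum_coeff_def pochhammer_rec)

lemma sin_sum_coeff_top: "l > 0 \<Longrightarrow> sin_sum_coeff (real l) x l = 0"
  by (auto simp: sin_sum_coeff_def pochhammer_eq_0_iff intro!: exI[of _ "l - 1"])

lemma sin_sum_coeff_rec:
  assumes x: "x \<ge> 0" and L: "L \<ge> 1"
  shows "(x+1)*(x+2*L)/(x+L+1) * sin_sum_coeff L (x+1) j
       = (x+L) * (sin_sum_coeff L x j + sin_sum_coeff L x (Suc j) - sin_sum_coeff L (x-1) (Suc j))"
proof -
  define P where "P = pochhammer (x+1) j"
  define Q where "Q = pochhammer (x+L+1) j"
  define A where "A = pochhammer (1-L) j"
  define X where "X = P * A / (Q * fact j)"
  have Q: "Q > 0" unfolding Q_def using x L by (intro pochhammer_pos) simp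
  have ne: "x + 1 \<noteq> 0" "x + L + 1 \<noteq> 0" "x + L + 1 + j \<noteq> 0" "x + L \<noteq> 0" "real j + 1 \<noteq> 0"
    using x L by simp_all
  have h1: "pochhammer (x+2) j = P * (x+1+j) / (x+1)"
    using pochhammer_rec[of "x+1" j] x unfolding P_def by (simp add: pochhammer_Suc field_simps)
  have h2: "pochhammer (x+L+2) j = Q * (x+L+1+j) / (x+L+1)"
    using pochhammer_rec[of "x+L+1" j] x L unfolding Q_def by (simp add: pochhammer_Suc field_simps)
  have "sin_sum_coeff L (x+1) j = pochhammer (x+2) j * A / (pochhammer (x+L+2) j * fact j)"
    unfolding sin_sum_coeff_def A_def by (simp add: add_ac)
  also have "\<dots> = X * ((x+1+j)*(x+L+1)/((x+1)*(x+L+1+j)))"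
    unfolding h1 h2 X_def using Q ne by (simp add: divide_simps)
  finally have e1: "sin_sum_coeff L (x+1) j = X * ((x+1+j)*(x+L+1)/((x+1)*(x+L+1+j)))" .
  have e2: "sin_sum_coeff L x j = X"
    unfolding sin_sum_coeff_def P_def Q_def A_def X_def ..
  have e3: "sin_sum_coeff L x (Suc j) = X * ((x+1+j)*(1-L+j)/((x+L+1+j)*(j+1)))"
    unfolding sin_sum_coeff_def X_def P_def Q_def A_def by (simp add: pochhammer_Suc fact_Suc ac_simps)
  have "sin_sum_coeff L (x-1) (Suc j)
      = pochhammer x (Suc j) * pochhammer (1-L) (Suc j) / (pochhammer (x+L) (Suc j) * fact (Suc j))"
    unfolding sin_sum_coeff_def by (simp add: add_ac)
  also have "\<dots> = X * (x*(1-L+j)/((x+L)*(j+1)))"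
    unfolding pochhammer_rec[of x] pochhammer_rec[of "x+L"]
    unfolding pochhammer_Suc[of "1-L"] fact_Suc X_def P_def Q_def A_def by (simp add: ac_simps)
  finally have e4: "sin_sum_coeff L (x-1) (Suc j) = X * (x*(1-L+j)/((x+L)*(j+1)))" .
  show ?thesis
    unfolding e1 e2 e3 e4 using ne by (simp add: divide_simps) (simp add: algebra_simps)
qed

lemma sum_lessThan_shift_vanishing_top:
  fixes c g :: "nat \<Rightarrow> 'a::comm_ring"
  assumes "c l = 0"
  shows "(\<Sum>k<l. c k * g k) = c 0 * g 0 + (\<Sum>k<l. c (Suc k) * g (Suc k))"
  using sum.lessThan_Suc[of "\<lambda>k. c k * g k" l] sum.lessThan_Suc_shift[of "\<lambda>k. c k * g k" l] assms
  by simp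

lemma two_cos_mult_sin: "2 * cos (t::real) * sin (a * t) = sin ((a + 1) * t) + sin ((a - 1) * t)"
proof -
  have "cos t * sin (a * t) = (sin (t + a * t) - sin (t - a * t)) / 2"
    by (rule cos_times_sin)
  also have "t + a * t = (a + 1) * t" by (simp add: algebra_simps)
  also have "t - a * t = - ((a - 1) * t)" by (simp add: algebra_simps)
  finally show ?thesis by simp
qed

lemma sin_sum_minus_one: "sin_sum l (-1) t = 0"
  unfolding sin_sum_def
proof (intro sum.neutral ballI)
  fix k
  show "sin_sum_coeff (real l) (- 1) k * sin ((- 1 + 2 * real k + 1) * t) = 0"
    by (cases k) (simp_all add: sin_sum_coeff_minus_one_Suc)
qed

lemma two_cos_mult_sin_sum:
  assumes l: "l > 0"
  shows "2 * cos t * sin_sum l x t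
    = (\<Sum>k<l. sin_sum_coeff (real l) x k * sin ((x + 2 * real k + 2) * t)) + sin (x * t)
      + (\<Sum>k<l. sin_sum_coeff (real l) x (Suc k) * sin ((x + 2 * real k + 2) * t))"
proof -
  let ?c = "sin_sum_coeff (real l)"
  let ?g = "\<lambda>k::nat. sin ((x + 2 * real k + 2) * t)"
  have "2 * cos t * sin_sum l x t
      = (\<Sum>k<l. ?c x k * ?g k) + (\<Sum>k<l. ?c x k * sin ((x + 2 * real k) * t))"
    unfolding sin_sum_def sum_distrib_left sum.distrib[symmetric]
  proof (intro sum.cong refl)
    fix k
    have "2 * cos t * sin ((x + 2 * real k + 1) * t) = ?g k + sin ((x + 2 * real k) * t)"
      using two_cos_mult_sin[of t "x + 2 * real k + 1"] by (simp add: algebra_simps)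
    then show "2 * cos t * (?c x k * sin ((x + 2 * real k + 1) * t))
        = ?c x k * ?g k + ?c x k * sin ((x + 2 * real k) * t)"
      by (simp add: algebra_simps)
  qed
  also have "(\<Sum>k<l. ?c x k * sin ((x + 2 * real k) * t)) = sin (x * t) + (\<Sum>k<l. ?c x (Suc k) * ?g k)"
    using sum_lessThan_shift_vanishing_top[of "?c x" l "\<lambda>k. sin ((x + 2 * real k) * t)",
      OF sin_sum_coeff_top[OF l]]
    by (simp add: algebra_simps)
  finally show ?thesis by simp
qed

lemma sin_sum_rec:
  assumes l: "l > 0" and x: "x \<ge> 0"
  shows "(x+1)*(x+2*real l)/(x+real l+1) * sin_sum l (x+1) t
       = 2*(x+real l) * cos t * sin_sum l x t - (x + real l) * sin_sum l (x-1) t"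
proof -
  let ?L = "real l" and ?c = "sin_sum_coeff (real l)"
  let ?g = "\<lambda>k::nat. sin ((x + 2 * real k + 2) * t)"
  have lower: "sin_sum l (x-1) t = sin (x * t) + (\<Sum>k<l. ?c (x-1) (Suc k) * ?g k)"
    unfolding sin_sum_def
    using sum_lessThan_shift_vanishing_top[of "?c (x-1)" l "\<lambda>k. sin ((x - 1 + 2 * real k + 1) * t)",
        OF sin_sum_coeff_top[OF l]]
    by (simp add: algebra_simps)
  have upper: "sin_sum l (x+1) t = (\<Sum>k<l. ?c (x+1) k * ?g k)"
    unfolding sin_sum_def by (intro sum.cong refl) (simp add: algebra_simps)
  have "(x+1)*(x+2*?L)/(x+?L+1) * sin_sum l (x+1) t
      = (\<Sum>k<l. (x+?L) * (?c x k + ?c x (Suc k) - ?c (x-1) (Suc k)) * ?g k)"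
    unfolding upper sum_distrib_left using x l
    by (intro sum.cong refl) (simp add: sin_sum_coeff_rec[symmetric])
  also have "\<dots> = (x+?L) * (2 * cos t * sin_sum l x t - sin_sum l (x-1) t)"
    unfolding two_cos_mult_sin_sum[OF l] lower
    by (simp add: sum_distrib_left sum.distrib[symmetric] sum_subtractf[symmetric] algebra_simps)
  finally show ?thesis by (simp add: algebra_simps)
qed

lemma sin_sum_one:
  assumes l: "l > 0"
  shows "sin_sum l 1 t = (real l + 1) * cos t * sin_sum l 0 t"
proof -
  have "(0+1)*(0+2*real l)/(0+real l+1) * sin_sum l (0+1) t
       = 2*(0+real l) * cos t * sin_sum l 0 t - (0 + real l) * sin_sum l (0-1) t"
    by (rule sin_sum_rec[OF l]) simp
  then have "(2 * real l) * sin_sum l 1 t = (2 * real l) * ((real l + 1) * cos t * sin_sum l 0 t)"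
    by (simp add: sin_sum_minus_one field_simps add_nonneg_eq_0_iff)
  then show ?thesis
    using l by simp
qed

section \<open>Odd powers of the sine\<close>

lemma sin_sq_mult_odd_sin:
  fixes k t :: real
  shows "sin t ^ 2 * sin ((2*k + 1) * t)
       = sin ((2*k + 1) * t) / 2 - sin ((2*k + 3) * t) / 4 - sin ((2*k - 1) * t) / 4"
proof -
  have "sin ((2*k + 3) * t) + sin ((2*k - 1) * t) = 2 * sin ((2*k + 1) * t) * cos (2*t)"
    using sin_add[of "(2*k + 1) * t" "2*t"] sin_diff[of "(2*k + 1) * t" "2*t"] by (simp add: algebra_simps)
  then show ?thesis
    unfolding cos_double_sin by (simp add: algebra_simps)
qed

lemma sin_sq_mult_odd_sin_sum:
  fixes b :: "nat \<Rightarrow> real"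
  assumes b: "\<And>k. k \<ge> N \<Longrightarrow> b k = 0"
  shows "sin t ^ 2 * (\<Sum>k<N. b k * sin ((2 * real k + 1) * t))
       = (\<Sum>k<Suc N. (b k / 2 - b (Suc k) / 4 + (if k = 0 then b 0 / 4 else - b (k-1) / 4))
                        * sin ((2 * real k + 1) * t))"
proof -
  let ?s = "\<lambda>a. sin (a * t)"
  have lower: "(\<Sum>k<Suc N. b (Suc k) * ?s (2 * real k + 1))
      = (\<Sum>k<N. b k * ?s (2 * real k - 1)) + b 0 * ?s 1"
  proof -
    have "(\<Sum>k<N. b k * ?s (2 * real k - 1)) = (\<Sum>k<Suc (Suc N). b k * ?s (2 * real k - 1))"
      using b by simp
    also have "\<dots> = - b 0 * ?s 1 + (\<Sum>k<Suc N. b (Suc k) * ?s (2 * real k + 1))"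
      unfolding sum.lessThan_Suc_shift by (simp add: algebra_simps)
    finally show ?thesis by simp
  qed
  have upper: "(\<Sum>k<Suc N. (if k = 0 then 0 else b (k-1)) * ?s (2 * real k + 1))
      = (\<Sum>k<N. b k * ?s (2 * real k + 3))"
    unfolding sum.lessThan_Suc_shift by (simp add: algebra_simps)
  have "(\<Sum>k<Suc N. (b k / 2 - b (Suc k) / 4 + (if k = 0 then b 0 / 4 else - b (k-1) / 4))
                      * ?s (2 * real k + 1))
      = (\<Sum>k<Suc N. b k * ?s (2 * real k + 1)) / 2
        - (\<Sum>k<Suc N. b (Suc k) * ?s (2 * real k + 1)) / 4
        - (\<Sum>k<Suc N. (if k = 0 then 0 else b (k-1)) * ?s (2 * real k + 1)) / 4
        + b 0 / 4 * ?s 1"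
    unfolding sum_divide_distrib sum_subtractf[symmetric]
    by (simp add: sum.lessThan_Suc_shift[where n = N] algebra_simps del: sum.lessThan_Suc)
  also have "\<dots> = (\<Sum>k<N. b k * ?s (2 * real k + 1)) / 2 - (\<Sum>k<N. b k * ?s (2 * real k - 1)) / 4
        - (\<Sum>k<N. b k * ?s (2 * real k + 3)) / 4"
    unfolding lower upper using b by (simp add: algebra_simps)
  also have "\<dots> = (\<Sum>k<N. b k * (sin t ^ 2 * ?s (2 * real k + 1)))"
    unfolding sin_sq_mult_odd_sin by (simp add: right_diff_distrib sum_subtractf sum_divide_distrib)
  also have "\<dots> = sin t ^ 2 * (\<Sum>k<N. b k * ?s (2 * real k + 1))"
    by (simp add: sum_distrib_left ac_simps)
  finally show ?thesis ..
qed

definition sin_power_coeff :: "nat \<Rightarrow> nat \<Rightarrow> real" where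
  "sin_power_coeff l k = (-1)^k * real ((2*l - 1) choose (l + k)) / 4^(l - 1)"

lemma sin_power_coeff_eq_0: "l \<ge> 1 \<Longrightarrow> k \<ge> l \<Longrightarrow> sin_power_coeff l k = 0"
  by (simp add: sin_power_coeff_def binomial_eq_0)

lemma sin_power_coeff_Suc:
  assumes l: "l \<ge> 1"
  shows "sin_power_coeff (Suc l) k = sin_power_coeff l k / 2 - sin_power_coeff l (Suc k) / 4
           + (if k = 0 then sin_power_coeff l 0 / 4 else - sin_power_coeff l (k-1) / 4)"
proof -
  define N where "N = 2*l - 1"
  have N: "2*l - 1 = N" "2 * Suc l - 1 = Suc (Suc N)" using l by (auto simp: N_def)
  have four: "(4::real)^(Suc l - 1) = 4 * 4^(l-1)"
    using l by (simp add: power_Suc[symmetric] Suc_diff_le[symmetric])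
  have pascal: "(Suc (Suc N) choose Suc (Suc j)) = (N choose j) + 2 * (N choose Suc j) + (N choose Suc (Suc j))"
    for j by simp
  show ?thesis
  proof (cases k)
    case 0
    obtain j where j: "l = Suc j" using l by (cases l) auto
    have "N - j = l" "j \<le> N" using N j by auto
    then have "(N choose j) = (N choose l)"
      using binomial_symmetric[of j N] by simp
    then have "real (Suc (Suc N) choose Suc l) = 3 * real (N choose l) + real (N choose Suc l)"
      using pascal[of j] j by simp
    then show ?thesis unfolding sin_power_coeff_def N four using 0 by (simp add: field_simps)
  next
    case (Suc i)
    have "(Suc (Suc N) choose (Suc l + k)) = (N choose (l + i)) + 2 * (N choose (l + k)) + (N choose (Suc (l + k)))"
      using pascal[of "l + i"] Suc by simp
    then show ?thesis unfolding sin_power_coeff_def N four using Suc by (simp add: field_simps)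
  qed
qed

lemma sin_power_odd:
  assumes "l \<ge> 1"
  shows "sin t ^ (2*l - 1) = (\<Sum>k<l. sin_power_coeff l k * sin ((2 * real k + 1) * t))"
  using assms
proof (induction l rule: nat_induct_at_least)
  case base
  then show ?case by (simp add: sin_power_coeff_def)
next
  case (Suc l)
  have "sin t ^ (2 * Suc l - 1) = sin t ^ 2 * sin t ^ (2*l - 1)"
    using Suc(1) by (simp add: power_add[symmetric])
  also have "\<dots> = (\<Sum>k<Suc l. sin_power_coeff (Suc l) k * sin ((2 * real k + 1) * t))"
    unfolding Suc(2) sin_power_coeff_Suc[OF Suc(1)]
    by (rule sin_sq_mult_odd_sin_sum) (use Suc(1) sin_power_coeff_eq_0 in auto)
  finally show ?case .
qed

lemma sin_sum_coeff_zero_Suc: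
  assumes "L \<ge> 0"
  shows "sin_sum_coeff L 0 (Suc k) = sin_sum_coeff L 0 k * ((real k + 1 - L) / (real k + 1 + L))"
proof -
  have "pochhammer (L + 1) k \<noteq> 0" "real k + 1 + L \<noteq> 0"
    using pochhammer_pos[of "L + 1" k] assms by auto
  then show ?thesis
    unfolding sin_sum_coeff_def pochhammer_Suc fact_Suc
    by (simp add: divide_simps) (simp add: algebra_simps)
qed

lemma sin_power_coeff_Suc_ratio:
  assumes "k < l"
  shows "sin_power_coeff l (Suc k) = sin_power_coeff l k * ((real k + 1 - real l) / (real k + 1 + real l))"
proof -
  let ?N = "2*l - 1"
  have "Suc (l+k) * (?N choose Suc (l+k)) = ?N * ((?N - 1) choose (l+k))"
    by (rule binomial_absorption)
  also have "\<dots> = (?N - (l+k)) * (?N choose (l+k))"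
    by (rule binomial_absorb_comp[symmetric])
  finally have "real (Suc (l+k)) * real (?N choose Suc (l+k)) = real (?N - (l+k)) * real (?N choose (l+k))"
    by (metis of_nat_mult)
  moreover have "real (?N - (l+k)) = real l - 1 - real k"
    using assms by (simp add: of_nat_diff)
  ultimately have "real (Suc (l+k)) * real (?N choose Suc (l+k)) = (real l - 1 - real k) * real (?N choose (l+k))"
    by simp
  then have binom: "real (?N choose (l + Suc k))
      = real (?N choose (l+k)) * (real l - 1 - real k) / (real k + 1 + real l)"
    by (simp add: field_simps)
  have "real k + 1 + real l \<noteq> 0" by simp
  then show ?thesis
    unfolding sin_power_coeff_def binom by (simp add: field_simps)
qed

lemma sin_power_coeff_eq_sin_sum_coeff:
  assumes "k < l"
  shows "sin_power_coeff l k = sin_power_coeff l 0 * sin_sum_coeff (real l) 0 k"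
  using assms
proof (induction k)
  case (Suc k)
  then show ?case
    by (simp add: sin_power_coeff_Suc_ratio sin_sum_coeff_zero_Suc)
qed simp

section \<open>Gegenbauer polynomials of the cosine as sine sums\<close>

definition gegenbauer_sin_scale :: "nat \<Rightarrow> nat \<Rightarrow> real" where
  "gegenbauer_sin_scale l n =
     sin_power_coeff l 0 * pochhammer (2 * real l) n / pochhammer (real l + 1) n"

lemma gegenbauer_sin_scale_pos: "l > 0 \<Longrightarrow> gegenbauer_sin_scale l n > 0"
  by (simp add: gegenbauer_sin_scale_def sin_power_coeff_def pochhammer_pos)

lemma gegenbauer_sin_scale_Suc:
  "gegenbauer_sin_scale l (Suc n) = gegenbauer_sin_scale l n * (real n + 2 * real l) / (real n + real l + 1)"
proof -
  have "pochhammer (real l + 1) n > 0" by (simp add: pochhammer_pos)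
  then show ?thesis
    unfolding gegenbauer_sin_scale_def pochhammer_Suc by (simp add: divide_simps ac_simps)
qed

lemma sin_power_mult_gegenbauer_0:
  assumes l: "l > 0"
  shows "sin t ^ (2*l - 1) * gegenbauer 0 (real l) (cos t) = gegenbauer_sin_scale l 0 * sin_sum l 0 t"
proof -
  have "sin t ^ (2*l - 1) = (\<Sum>k<l. sin_power_coeff l k * sin ((2 * real k + 1) * t))"
    using l by (intro sin_power_odd) simp
  also have "\<dots> = gegenbauer_sin_scale l 0 * sin_sum l 0 t"
    unfolding sin_sum_def sum_distrib_left gegenbauer_sin_scale_def
  proof (intro sum.cong refl)
    fix k assume "k \<in> {..<l}"
    then show "sin_power_coeff l k * sin ((2 * real k + 1) * t)
        = sin_power_coeff l 0 * pochhammer (2 * real l) 0 / pochhammer (real l + 1) 0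
          * (sin_sum_coeff (real l) 0 k * sin ((0 + 2 * real k + 1) * t))"
      using sin_power_coeff_eq_sin_sum_coeff[of k l] by simp
  qed
  finally show ?thesis by (simp add: gegenbauer_def)
qed

lemma sin_power_mult_gegenbauer_cos:
  assumes l: "l > 0"
  shows "sin t ^ (2*l - 1) * gegenbauer n (real l) (cos t) = gegenbauer_sin_scale l n * sin_sum l (real n) t"
proof (induction n rule: induct_nat_012)
  case 0
  show ?case using sin_power_mult_gegenbauer_0[OF l] by simp
next
  case 1
  have "gegenbauer_sin_scale l 1 * sin_sum l 1 t
      = 2 * real l * cos t * (gegenbauer_sin_scale l 0 * sin_sum l 0 t)"
    using gegenbauer_sin_scale_Suc[of l 0] sin_sum_one[OF l, of t] by simp
  then show ?case
    using sin_power_mult_gegenbauer_0[OF l, of t] by (simp add: gegenbauer_def)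
next
  case (ge2 n)
  let ?L = "real l" and ?s = "sin t ^ (2*l - 1)" and ?K = "gegenbauer_sin_scale l"
  have three_term: "(real n + 2) * gegenbauer (Suc (Suc n)) ?L (cos t)
      = 2 * (real n + 1 + ?L) * cos t * gegenbauer (Suc n) ?L (cos t)
        - (real n + 2 * ?L) * gegenbauer n ?L (cos t)"
    using gegenbauer_rec[of "Suc n" ?L "cos t"] by (simp add: algebra_simps)
  have sin_three_term: "(real n + 2) * (real n + 1 + 2 * ?L) / (real n + ?L + 2) * sin_sum l (real (Suc (Suc n))) t
      = 2 * (real n + 1 + ?L) * cos t * sin_sum l (real (Suc n)) t - (real n + ?L + 1) * sin_sum l (real n) t"
    using sin_sum_rec[OF l, of "real (Suc n)" t] by (simp add: algebra_simps)
  have K: "(real n + 2 * ?L) * ?K n = (real n + ?L + 1) * ?K (Suc n)"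
    "?K (Suc (Suc n)) = ?K (Suc n) * (real n + 1 + 2 * ?L) / (real n + ?L + 2)"
    by (simp_all add: gegenbauer_sin_scale_Suc add_ac)
  have "(real n + 2) * (?s * gegenbauer (Suc (Suc n)) ?L (cos t))
      = 2 * (real n + 1 + ?L) * cos t * (?s * gegenbauer (Suc n) ?L (cos t))
        - (real n + 2 * ?L) * (?s * gegenbauer n ?L (cos t))"
    using arg_cong[OF three_term, of "\<lambda>z. ?s * z"] by (simp add: algebra_simps)
  also have "\<dots> = 2 * (real n + 1 + ?L) * cos t * (?K (Suc n) * sin_sum l (real (Suc n)) t)
        - ((real n + 2 * ?L) * ?K n) * sin_sum l (real n) t"
    unfolding ge2 by (simp add: algebra_simps)
  also have "\<dots> = ?K (Suc n) * (2 * (real n + 1 + ?L) * cos t * sin_sum l (real (Suc n)) t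
        - (real n + ?L + 1) * sin_sum l (real n) t)"
    unfolding K(1) by (simp add: algebra_simps)
  also have "\<dots> = (real n + 2) * (?K (Suc (Suc n)) * sin_sum l (real (Suc (Suc n))) t)"
    unfolding sin_three_term[symmetric] K(2) by (simp add: field_simps)
  finally show ?case by simp
qed

section \<open>Integrals over the interval\<close>

lemma integral_cos_substitution:
  fixes g :: "real \<Rightarrow> 'a::euclidean_space"
  assumes g: "continuous_on {-1..1} g"
  shows "integral {-1..1} g = integral {0..pi} (\<lambda>t. sin t *\<^sub>R g (cos t))"
proof -
  have "((\<lambda>t. (- sin t) *\<^sub>R g (cos t)) has_integral
      (integral {cos 0..cos pi} g - integral {cos pi..cos 0} g)) {0..pi}"
  proof (rule has_integral_substitution_general[of "{}" 0 pi cos "-1" 1 g])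
    show "(cos has_real_derivative - sin t) (at t within {0..pi})" for t
      by (rule has_field_derivative_at_within) (rule DERIV_cos)
  qed (use g pi_ge_zero in \<open>auto intro!: continuous_intros\<close>)
  then have "((\<lambda>t. - (sin t *\<^sub>R g (cos t))) has_integral (- integral {-1..1} g)) {0..pi}"
    by simp
  then have "((\<lambda>t. sin t *\<^sub>R g (cos t)) has_integral integral {-1..1} g) {0..pi}"
    by (simp add: has_integral_neg_iff)
  then show ?thesis
    by (simp add: integral_unique)
qed

lemma has_integral_cos_nat_mult:
  "((\<lambda>t. cos (real p * t)) has_integral (if p = 0 then pi else 0)) {0..pi}"
proof (cases "p = 0")
  case True
  then show ?thesis using has_integral_const_real[of "1::real" 0 pi] by simp
next
  case False
  have "((\<lambda>t. cos (real p * t)) has_integral (sin (real p * pi) / real p - sin (real p * 0) / real p)) {0..pi}"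
  proof (rule fundamental_theorem_of_calculus)
    show "((\<lambda>t. sin (real p * t) / real p) has_vector_derivative cos (real p * x)) (at x within {0..pi})" for x
      unfolding has_real_derivative_iff_has_vector_derivative[symmetric]
      using False by (auto intro!: derivative_eq_intros)
  qed simp
  then show ?thesis using False by (simp add: sin_npi)
qed

definition cos_power_sin_integral :: "nat \<Rightarrow> nat \<Rightarrow> real" where
  "cos_power_sin_integral d m = integral {0..pi} (\<lambda>t. (2 * cos t)^d * sin t * sin (real m * t))"

lemma cos_power_sin_integral_0:
  assumes m: "m \<ge> 1"
  shows "cos_power_sin_integral 0 m = (if m = 1 then pi/2 else 0)"
proof -
  have e: "(2 * cos t)^0 * sin t * sin (real m * t) = (cos (real (m-1) * t) - cos (real (m+1) * t)) / 2" for t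
  proof -
    have "sin t * sin (real m * t) = (cos (t - real m * t) - cos (t + real m * t)) / 2"
      by (rule sin_times_sin)
    also have "t - real m * t = - (real (m-1) * t)" using m by (simp add: of_nat_diff algebra_simps)
    also have "t + real m * t = real (m+1) * t" by (simp add: algebra_simps)
    finally show ?thesis by simp
  qed
  have "((\<lambda>t. (cos (real (m-1) * t) - cos (real (m+1) * t)) / 2) has_integral
        (((if m - 1 = 0 then pi else 0) - (if m + 1 = 0 then pi else 0)) / 2)) {0..pi}"
    by (intro has_integral_divide has_integral_diff has_integral_cos_nat_mult)
  then show ?thesis
    unfolding cos_power_sin_integral_def e using m by (auto dest: integral_unique)
qed

lemma cos_power_sin_integral_eq:
  assumes "m \<ge> d + 1"
  shows "cos_power_sin_integral d m = (if m = d + 1 then pi/2 else 0)"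
  using assms
proof (induction d arbitrary: m)
  case 0
  then show ?case using cos_power_sin_integral_0[of m] by simp
next
  case (Suc d)
  have m: "real m + 1 = real (m+1)" "real m - 1 = real (m - 1)"
    using Suc.prems by (simp_all add: of_nat_diff)
  have split: "(2 * cos t)^(Suc d) * sin t * sin (real m * t)
      = (2 * cos t)^d * sin t * sin (real (m+1) * t) + (2 * cos t)^d * sin t * sin (real (m-1) * t)" for t
  proof -
    have "(2 * cos t)^(Suc d) * sin t * sin (real m * t) = (2 * cos t)^d * sin t * (2 * cos t * sin (real m * t))"
      by (simp add: algebra_simps)
    then show ?thesis
      unfolding two_cos_mult_sin m by (simp only: distrib_left)
  qed
  have int: "(\<lambda>t. (2 * cos t)^d * sin t * sin (real k * t)) integrable_on {0..pi}" for k
    by (intro integrable_continuous_interval continuous_intros)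
  have "cos_power_sin_integral (Suc d) m = cos_power_sin_integral d (m+1) + cos_power_sin_integral d (m-1)"
    unfolding cos_power_sin_integral_def split by (rule integral_add[OF int int])
  then show ?case
    using Suc.IH[of "m+1"] Suc.IH[of "m-1"] Suc.prems by auto
qed

lemma integral_sin_mult_gegenbauer_cos:
  "integral {0..pi} (\<lambda>t. sin t * sin (real (n + 2*j + 1) * t) * gegenbauer n L (cos t))
    = (if j = 0 then pochhammer L n / fact n * (pi/2) else 0)"
proof -
  let ?a = "\<lambda>k. (-1)^k * pochhammer L (n - k) / (fact k * fact (n - 2*k))"
  have "integral {0..pi} (\<lambda>t. sin t * sin (real (n + 2*j + 1) * t) * gegenbauer n L (cos t))
      = integral {0..pi} (\<lambda>t. \<Sum>k\<le>n div 2. ?a k * ((2 * cos t)^(n - 2*k) * sin t * sin (real (n + 2*j + 1) * t)))"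
    unfolding gegenbauer_def sum_distrib_left by (rule integral_cong) (simp add: algebra_simps)
  also have "\<dots> = (\<Sum>k\<le>n div 2. integral {0..pi}
      (\<lambda>t. ?a k * ((2 * cos t)^(n - 2*k) * sin t * sin (real (n + 2*j + 1) * t))))"
    by (rule integral_sum) (auto intro!: integrable_continuous_interval continuous_intros)
  also have "\<dots> = (\<Sum>k\<le>n div 2. ?a k * cos_power_sin_integral (n - 2*k) (n + 2*j + 1))"
    unfolding cos_power_sin_integral_def by (intro sum.cong refl integral_mult_right)
  also have "\<dots> = (\<Sum>k\<le>n div 2. if k = 0 \<and> j = 0 then pochhammer L n / fact n * (pi/2) else 0)"
  proof (intro sum.cong refl)
    fix k assume k: "k \<in> {..n div 2}"
    then have "cos_power_sin_integral (n - 2*k) (n + 2*j + 1) = (if n + 2*j + 1 = n - 2*k + 1 then pi/2 else 0)"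
      by (intro cos_power_sin_integral_eq) simp
    moreover have "(n + 2*j + 1 = n - 2*k + 1) \<longleftrightarrow> (k = 0 \<and> j = 0)" using k by auto
    ultimately show "?a k * cos_power_sin_integral (n - 2*k) (n + 2*j + 1)
        = (if k = 0 \<and> j = 0 then pochhammer L n / fact n * (pi/2) else 0)"
      by auto
  qed
  also have "\<dots> = (if j = 0 then pochhammer L n / fact n * (pi/2) else 0)"
    by (simp add: sum.delta)
  finally show ?thesis .
qed

lemma gegenbauer_weight_cos:
  assumes l: "l \<ge> 1" and t: "t \<in> {0..pi}"
  shows "gegenbauer_weight (real l) (cos t) = sin t ^ (2*l - 1)"
proof -
  have s: "sin t \<ge> 0" using t by (simp add: sin_ge_zero)
  have "gegenbauer_weight (real l) (cos t) = (sin t powr 2) powr (real l - 1/2)"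
    unfolding gegenbauer_weight_def using s by (simp add: sin_squared_eq[symmetric] powr_numeral)
  also have "\<dots> = sin t powr real (2*l - 1)"
    using l by (simp add: powr_powr of_nat_diff algebra_simps)
  also have "\<dots> = sin t ^ (2*l - 1)"
  proof (cases "sin t = 0")
    case False
    then show ?thesis using s by (intro powr_realpow) simp
  qed (use l in simp)
  finally show ?thesis .
qed

lemma continuous_on_gegenbauer_weight:
  assumes "l \<ge> 1"
  shows "continuous_on {-1..1} (gegenbauer_weight (real l))"
  unfolding gegenbauer_weight_def
proof (rule continuous_on_powr')
  show "\<forall>x\<in>{-1..1::real}. 0 \<le> 1 - x^2 \<and> (1 - x^2 = 0 \<longrightarrow> 0 < real l - 1/2)"
    using assms by (auto simp: abs_square_le_1)
qed (intro continuous_intros)+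

lemma continuous_on_gegenbauer: "continuous_on S (gegenbauer n L)"
  unfolding gegenbauer_def by (intro continuous_intros)

lemma integral_gegenbauer_weight_mult:
  fixes g :: "real \<Rightarrow> 'a::euclidean_space"
  assumes l: "l > 0" and g: "continuous_on {-1..1} g"
  shows "integral {-1..1} (\<lambda>x. (gegenbauer_weight (real l) x * gegenbauer n (real l) x) *\<^sub>R g x)
       = (\<Sum>k<l. (gegenbauer_sin_scale l n * sin_sum_coeff (real l) (real n) k) *\<^sub>R
            integral {0..pi} (\<lambda>t. (sin t * sin (real (n + 2*k + 1) * t)) *\<^sub>R g (cos t)))"
proof -
  let ?W = "gegenbauer_weight (real l)" and ?C = "gegenbauer n (real l)"
  let ?c = "\<lambda>k. gegenbauer_sin_scale l n * sin_sum_coeff (real l) (real n) k"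
  let ?h = "\<lambda>k t. (sin t * sin (real (n + 2*k + 1) * t)) *\<^sub>R g (cos t)"
  have gcos: "continuous_on {0..pi} (\<lambda>t. g (cos t))"
    by (rule continuous_on_compose2[OF g]) (auto intro!: continuous_intros)
  have "integral {-1..1} (\<lambda>x. (?W x * ?C x) *\<^sub>R g x)
      = integral {0..pi} (\<lambda>t. sin t *\<^sub>R ((?W (cos t) * ?C (cos t)) *\<^sub>R g (cos t)))"
    using l g continuous_on_gegenbauer_weight[of l]
    by (intro integral_cos_substitution continuous_intros continuous_on_gegenbauer) auto
  also have "\<dots> = integral {0..pi} (\<lambda>t. \<Sum>k<l. ?c k *\<^sub>R ?h k t)"
  proof (rule integral_cong)
    fix t assume t: "t \<in> {0..pi}"
    have "sin t * (?W (cos t) * ?C (cos t)) = sin t * (gegenbauer_sin_scale l n * sin_sum l (real n) t)"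
      using l t by (simp add: gegenbauer_weight_cos sin_power_mult_gegenbauer_cos[symmetric])
    also have "\<dots> = (\<Sum>k<l. ?c k * (sin t * sin (real (n + 2*k + 1) * t)))"
      unfolding sin_sum_def sum_distrib_left by (intro sum.cong refl) (simp add: algebra_simps)
    finally show "sin t *\<^sub>R ((?W (cos t) * ?C (cos t)) *\<^sub>R g (cos t)) = (\<Sum>k<l. ?c k *\<^sub>R ?h k t)"
      by (simp add: scaleR_sum_left)
  qed
  also have "\<dots> = (\<Sum>k<l. integral {0..pi} (\<lambda>t. ?c k *\<^sub>R ?h k t))"
    using gcos by (intro integral_sum integrable_continuous_interval continuous_intros) auto
  also have "\<dots> = (\<Sum>k<l. ?c k *\<^sub>R integral {0..pi} (?h k))"
    by (simp only: integral_cmul)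
  finally show ?thesis .
qed

lemma gegenbauer_h_eq:
  assumes l: "l > 0"
  shows "gegenbauer_h n (real l) = gegenbauer_sin_scale l n * (pochhammer (real l) n / fact n * (pi/2))"
proof -
  let ?C = "gegenbauer n (real l)"
  have "gegenbauer_h n (real l) = integral {-1..1} (\<lambda>x. (gegenbauer_weight (real l) x * ?C x) *\<^sub>R ?C x)"
    unfolding gegenbauer_h_def by (simp add: power2_eq_square mult.assoc)
  also have "\<dots> = (\<Sum>k<l. (gegenbauer_sin_scale l n * sin_sum_coeff (real l) (real n) k) *\<^sub>R
            integral {0..pi} (\<lambda>t. (sin t * sin (real (n + 2*k + 1) * t)) *\<^sub>R ?C (cos t)))"
    by (rule integral_gegenbauer_weight_mult[OF l continuous_on_gegenbauer])
  also have "\<dots> = (\<Sum>k<l. gegenbauer_sin_scale l n * sin_sum_coeff (real l) (real n) k *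
       (if k = 0 then pochhammer (real l) n / fact n * (pi/2) else 0))"
    unfolding real_scaleR_def integral_sin_mult_gegenbauer_cos ..
  also have "\<dots> = gegenbauer_sin_scale l n * (pochhammer (real l) n / fact n * (pi/2))"
    using l by (simp add: if_distrib sum.delta' cong: if_cong)
  finally show ?thesis .
qed

lemma gegenbauer_coeff_eq_sin_integrals:
  assumes l: "l > 0" and f: "continuous_on {-1..1} (\<lambda>x. f (complex_of_real x))"
  shows "gegenbauer_coeff n (real l) f =
    (\<Sum>k<l. complex_of_real (sin_sum_coeff (real l) (real n) k) *
       integral {0..pi} (\<lambda>t. complex_of_real (sin t * sin (real (n + 2*k + 1) * t)) * f (complex_of_real (cos t))))
    / complex_of_real (pochhammer (real l) n / fact n * (pi/2))"
proof -
  let ?K = "gegenbauer_sin_scale l n"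
  have "integral {-1..1}
      (\<lambda>x. complex_of_real (gegenbauer_weight (real l) x * gegenbauer n (real l) x) * f (complex_of_real x))
    = (\<Sum>k<l. complex_of_real (?K * sin_sum_coeff (real l) (real n) k) *
       integral {0..pi} (\<lambda>t. complex_of_real (sin t * sin (real (n + 2*k + 1) * t)) * f (complex_of_real (cos t))))"
    using integral_gegenbauer_weight_mult[OF l f] by (simp only: scaleR_conv_of_real)
  also have "\<dots> = complex_of_real ?K * (\<Sum>k<l. complex_of_real (sin_sum_coeff (real l) (real n) k) *
       integral {0..pi} (\<lambda>t. complex_of_real (sin t * sin (real (n + 2*k + 1) * t)) * f (complex_of_real (cos t))))"
    by (simp add: sum_distrib_left mult.assoc)
  finally show ?thesis
    unfolding gegenbauer_coeff_def gegenbauer_h_eq[OF l]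
    using gegenbauer_sin_scale_pos[OF l, of n] by simp
qed

section \<open>The Joukowski map and the Bernstein ellipse\<close>

definition joukowski :: "complex \<Rightarrow> complex" where
  "joukowski w = (w + inverse w) / 2"

lemma joukowski_focal_sum:
  assumes "w \<noteq> 0"
  shows "cmod (joukowski w - 1) + cmod (joukowski w + 1) = cmod w + inverse (cmod w)"
proof -
  have "joukowski w - 1 = (w - 1)^2 / (2*w)" "joukowski w + 1 = (w + 1)^2 / (2*w)"
    using assms unfolding joukowski_def by (simp_all add: field_simps power2_eq_square)
  then have "cmod (joukowski w - 1) + cmod (joukowski w + 1) = (cmod (w - 1)^2 + cmod (w + 1)^2) / (2 * cmod w)"
    by (simp add: norm_divide norm_mult norm_power add_divide_distrib)
  also have "cmod (w - 1)^2 + cmod (w + 1)^2 = 2 * cmod w ^ 2 + 2"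
    unfolding cmod_power2 by (simp add: power2_eq_square algebra_simps)
  finally show ?thesis
    using assms by (simp add: field_simps power2_eq_square)
qed

lemma add_inverse_mono:
  fixes r s :: real
  assumes "1 \<le> r" "r \<le> s"
  shows "r + inverse r \<le> s + inverse s"
proof -
  have "r * s \<ge> 1"
    using assms mult_mono[of 1 r 1 s] by simp
  then have "(s - r) * (r * s - 1) / (r * s) \<ge> 0"
    using assms by simp
  moreover have "s + inverse s - (r + inverse r) = (s - r) * (r * s - 1) / (r * s)"
    using assms by (simp add: field_simps)
  ultimately show ?thesis by simp
qed

lemma joukowski_in_bernstein_region:
  assumes "1 \<le> cmod w" "cmod w \<le> rho"
  shows "joukowski w \<in> bernstein_region rho"
proof -
  have "w \<noteq> 0" using assms by auto
  then show ?thesis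
    using joukowski_focal_sum[of w] add_inverse_mono[OF assms] unfolding bernstein_region_def by simp
qed

lemma of_real_in_bernstein_region:
  assumes "rho > 1" "x \<in> {-1..1}"
  shows "complex_of_real x \<in> bernstein_region rho"
proof -
  have "complex_of_real x - 1 = complex_of_real (x - 1)" "complex_of_real x + 1 = complex_of_real (x + 1)"
    by simp_all
  then have "cmod (complex_of_real x - 1) + cmod (complex_of_real x + 1) = 2"
    using assms by (simp only: norm_of_real) auto
  then show ?thesis
    using add_inverse_mono[of 1 rho] assms unfolding bernstein_region_def by simp
qed

lemma bernstein_ellipse_eq_joukowski_circlepath:
  "bernstein_ellipse rho = joukowski \<circ> circlepath 0 rho"
proof
  fix t
  have "circlepath 0 rho t = complex_of_real rho * cis (2*pi*t)"
    by (simp add: circlepath cis_conv_exp mult_ac)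
  then show "bernstein_ellipse rho t = (joukowski \<circ> circlepath 0 rho) t"
    unfolding bernstein_ellipse_def joukowski_def
    by (simp add: inverse_mult_distrib of_real_inverse)
qed

lemma deriv_joukowski: "w \<noteq> 0 \<Longrightarrow> deriv joukowski w = (1 - inverse (w^2)) / 2"
  unfolding joukowski_def
  by (rule DERIV_imp_deriv) (auto intro!: derivative_eq_intros simp: power2_eq_square field_simps)

lemma joukowski_analytic: "joukowski analytic_on (- {0})"
  unfolding joukowski_def by (subst analytic_on_open) (auto intro!: holomorphic_intros)

lemma joukowski_inv_joukowski:
  assumes "cmod w > 1"
  shows "joukowski_inv (joukowski w) = w"
proof -
  have w: "w \<noteq> 0" using assms by auto
  define q where "q = (w - inverse w) / 2"
  have "joukowski w ^ 2 - 1 = q ^ 2"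
    unfolding joukowski_def q_def using w by (simp add: field_simps power2_eq_square)
  then have "csqrt (joukowski w ^ 2 - 1) ^ 2 = q ^ 2"
    by (simp only: power2_csqrt)
  then have "csqrt (joukowski w ^ 2 - 1) = q \<or> csqrt (joukowski w ^ 2 - 1) = - q"
    by (simp only: power2_eq_iff)
  have sum: "joukowski w + q = w" "joukowski w - q = inverse w"
    unfolding joukowski_def q_def by (simp_all add: field_simps)
  have inv: "cmod (inverse w) < 1"
    using assms by (simp add: norm_inverse inverse_less_1_iff)
  from \<open>csqrt _ = q \<or> _\<close> consider "csqrt (joukowski w ^ 2 - 1) = q" | "csqrt (joukowski w ^ 2 - 1) = - q"
    by blast
  then show ?thesis
  proof cases
    case 1
    then show ?thesis unfolding joukowski_inv_def 1 using assms sum by simp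
  next
    case 2
    then show ?thesis unfolding joukowski_inv_def 2 using inv sum by simp
  qed
qed

lemma joukowski_cis: "joukowski (cis t) = complex_of_real (cos t)"
  unfolding joukowski_def by (simp add: cis.ctr complex_eq_iff)

lemma contour_integral_circlepath_annulus_eq:
  assumes S: "open S" "H holomorphic_on S" and r: "0 < r" "r \<le> R"
    and annulus: "{w. r \<le> cmod w \<and> cmod w \<le> R} \<subseteq> S"
  shows "contour_integral (circlepath 0 R) H = contour_integral (circlepath 0 r) H"
proof -
  have "homotopic_loops S (circlepath 0 R) (circlepath 0 r)"
  proof (rule homotopic_loops_linear)
    fix t :: real
    define e where "e = exp (2 * of_real pi * \<i> * of_real t)"
    have e: "cmod e = 1" unfolding e_def by (simp add: norm_exp_eq_Re)
    show "closed_segment (circlepath 0 R t) (circlepath 0 r t) \<subseteq> S"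
    proof
      fix z assume "z \<in> closed_segment (circlepath 0 R t) (circlepath 0 r t)"
      then obtain u where u: "0 \<le> u" "u \<le> 1" "z = (1 - u) *\<^sub>R (of_real R * e) + u *\<^sub>R (of_real r * e)"
        unfolding closed_segment_def circlepath e_def by auto
      define \<rho> where "\<rho> = (1 - u) * R + u * r"
      have "z = of_real \<rho> * e"
        unfolding u(3) \<rho>_def by (simp add: scaleR_conv_of_real algebra_simps)
      moreover have "r \<le> \<rho>" "\<rho> \<le> R"
        using u r mult_left_mono[of r R "1 - u"] mult_left_mono[of r R u]
        unfolding \<rho>_def by (simp_all add: algebra_simps)
      ultimately have "cmod z = \<rho>" "r \<le> cmod z" "cmod z \<le> R"
        using e r by (simp_all add: norm_mult)
      then show "z \<in> S"
        using annulus by auto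
    qed
  qed (use r in auto)
  then show ?thesis
    using Cauchy_theorem_homotopic_loops[OF _ S] by simp
qed

lemma joukowski_circle_integrand_cis:
  "(1 - inverse ((cis t)^2)) / 2 * (F / (cis t)^m) * 1 * \<i> * cis t
     = complex_of_real (- sin t) * cis (- (real m * t)) * F"
proof -
  have "(1 - inverse ((cis t)^2)) / 2 * \<i> * cis t = (cis t - cis (- (2*t)) * cis t) * \<i> / 2"
    by (simp add: Complex.DeMoivre algebra_simps)
  also have "cis (- (2*t)) * cis t = cis (- t)"
    by (simp add: cis_mult)
  also have "(cis t - cis (- t)) * \<i> / 2 = complex_of_real (- sin t)"
    by (simp add: complex_eq_iff)
  finally have a: "(1 - inverse ((cis t)^2)) / 2 * \<i> * cis t = complex_of_real (- sin t)" .
  have b: "F / (cis t)^m = cis (- (real m * t)) * F"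
    by (simp add: Complex.DeMoivre divide_inverse mult.commute)
  have "(1 - inverse ((cis t)^2)) / 2 * (F / (cis t)^m) * 1 * \<i> * cis t
      = ((1 - inverse ((cis t)^2)) / 2 * \<i> * cis t) * (F / (cis t)^m)"
    by (simp add: ac_simps)
  then show ?thesis
    unfolding a b by (simp add: ac_simps)
qed

lemma joukowski_preimage:
  assumes "open T" "f holomorphic_on T"
  shows "open (- {0} \<inter> joukowski -` T)" "(f \<circ> joukowski) holomorphic_on (- {0} \<inter> joukowski -` T)"
proof -
  have "continuous_on (- {0}) joukowski"
    using joukowski_analytic analytic_imp_holomorphic holomorphic_on_imp_continuous_on by blast
  then show "open (- {0} \<inter> joukowski -` T)"
    using assms(1) by (intro continuous_open_preimage) auto
  show "(f \<circ> joukowski) holomorphic_on (- {0} \<inter> joukowski -` T)"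
  proof (rule holomorphic_on_compose)
    show "joukowski holomorphic_on (- {0} \<inter> joukowski -` T)"
      using analytic_imp_holomorphic[OF joukowski_analytic] by (rule holomorphic_on_subset) auto
    show "f holomorphic_on joukowski ` (- {0} \<inter> joukowski -` T)"
      using assms(2) by (rule holomorphic_on_subset) auto
  qed
qed

lemma contour_integral_bernstein_ellipse_eq_integral:
  assumes rho: "rho > 1" and T: "open T" "bernstein_region rho \<subseteq> T" "f holomorphic_on T"
  shows "contour_integral (bernstein_ellipse rho) (\<lambda>z. f z / joukowski_inv z ^ m)
     = integral {0..2*pi} (\<lambda>t. complex_of_real (- sin t) * cis (- (real m * t)) * f (complex_of_real (cos t)))"
proof -
  define H where "H w = (1 - inverse (w^2)) / 2 * (f (joukowski w) / w^m)" for w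
  define S where "S = - {0} \<inter> joukowski -` T"
  have S: "open S" "H holomorphic_on S"
    using joukowski_preimage[OF T(1,3)] unfolding S_def H_def o_def
    by (auto intro!: holomorphic_intros)
  have "contour_integral (bernstein_ellipse rho) (\<lambda>z. f z / joukowski_inv z ^ m)
      = contour_integral (circlepath 0 rho) (\<lambda>w. deriv joukowski w * (f (joukowski w) / joukowski_inv (joukowski w) ^ m))"
    unfolding bernstein_ellipse_eq_joukowski_circlepath
    using rho by (intro contour_integral_comp_analyticW[OF joukowski_analytic]) auto
  also have "\<dots> = contour_integral (circlepath 0 rho) H"
  proof (rule contour_integral_eq)
    fix w assume "w \<in> path_image (circlepath 0 rho)"
    then have "cmod w > 1" "w \<noteq> 0" using rho by auto
    then show "deriv joukowski w * (f (joukowski w) / joukowski_inv (joukowski w) ^ m) = H w"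
      unfolding H_def by (simp add: deriv_joukowski joukowski_inv_joukowski)
  qed
  also have "\<dots> = contour_integral (circlepath 0 1) H"
    using rho T(2) joukowski_in_bernstein_region
    by (intro contour_integral_circlepath_annulus_eq[OF S]) (auto simp: S_def)
  also have "\<dots> = integral {0..2*pi} (\<lambda>t. H (cis t) * 1 * \<i> * cis t)"
    unfolding circlepath_def using contour_integral_part_circlepath_eq[of 0 "2*pi" 0 1 H] by simp
  also have "\<dots> = integral {0..2*pi} (\<lambda>t. complex_of_real (- sin t) * cis (- (real m * t)) * f (complex_of_real (cos t)))"
    unfolding H_def joukowski_cis joukowski_circle_integrand_cis ..
  finally show ?thesis .
qed

lemma integral_sin_cis_reflect:
  fixes \<phi> :: "real \<Rightarrow> complex"
  assumes cont: "continuous_on UNIV \<phi>" and sym: "\<And>t. \<phi> (2*pi - t) = \<phi> t"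
  shows "integral {0..2*pi} (\<lambda>t. complex_of_real (- sin t) * cis (- (real m * t)) * \<phi> t)
       = 2 * \<i> * integral {0..pi} (\<lambda>t. complex_of_real (sin t * sin (real m * t)) * \<phi> t)"
proof -
  define G where "G t = complex_of_real (- sin t) * cis (- (real m * t)) * \<phi> t" for t
  have cG: "continuous_on UNIV G"
    unfolding G_def cis_conv_exp by (intro continuous_intros cont)
  then have iG: "G integrable_on {a..b}" "(\<lambda>t. G (2*pi - t)) integrable_on {a..b}" for a b
    by (auto intro!: integrable_continuous_interval continuous_on_subset[OF cG]
        continuous_on_compose2[OF cG] continuous_intros)
  have "integral {pi..2*pi} G = integral {- pi..0} (\<lambda>t. G (2*pi + t))"
    using integral_shift_Icc_real[of "-pi" 0 G "2*pi"] by (simp add: o_def add.commute)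
  also have "\<dots> = integral {- 0..- (- pi)} (\<lambda>t. G (2*pi + - t))"
    by (rule Henstock_Kurzweil_Integration.integral_reflect_real[of 0 "-pi" "\<lambda>t. G (2*pi + t)", symmetric])
  also have "\<dots> = integral {0..pi} (\<lambda>t. G (2*pi - t))"
    by simp
  finally have "integral {0..2*pi} G = integral {0..pi} (\<lambda>t. G t + G (2*pi - t))"
    using Henstock_Kurzweil_Integration.integral_combine[where a = 0 and c = pi and b = "2*pi" and f = G] iG
    by (simp add: integral_add)
  also have "\<dots> = integral {0..pi} (\<lambda>t. 2 * \<i> * (complex_of_real (sin t * sin (real m * t)) * \<phi> t))"
  proof (rule integral_cong)
    fix t :: real
    have "cis (- (real m * (2*pi - t))) = cis (real m * t) * cis (- (2*pi)) ^ m"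
      by (simp add: cis_mult Complex.DeMoivre algebra_simps)
    also have "cis (- (2*pi)) = 1"
      by (simp add: complex_eq_iff)
    finally have "cis (- (real m * (2*pi - t))) = cis (real m * t)" by simp
    then show "G t + G (2*pi - t) = 2 * \<i> * (complex_of_real (sin t * sin (real m * t)) * \<phi> t)"
      unfolding G_def sym by (simp add: sin_diff complex_eq_iff algebra_simps)
  qed
  finally show ?thesis unfolding G_def by simp
qed

lemma contour_integral_bernstein_ellipse:
  assumes rho: "rho > 1" and T: "open T" "bernstein_region rho \<subseteq> T" "f holomorphic_on T"
  shows "contour_integral (bernstein_ellipse rho) (\<lambda>z. f z / joukowski_inv z ^ m)
     = 2 * \<i> * integral {0..pi} (\<lambda>t. complex_of_real (sin t * sin (real m * t)) * f (complex_of_real (cos t)))"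
proof -
  have "continuous_on UNIV (\<lambda>t. f (complex_of_real (cos t)))"
    using rho T(2) of_real_in_bernstein_region
    by (intro continuous_on_compose2[OF holomorphic_on_imp_continuous_on[OF T(3)]] continuous_intros) auto
  then show ?thesis
    unfolding contour_integral_bernstein_ellipse_eq_integral[OF rho T]
    by (rule integral_sin_cis_reflect) (simp add: cos_diff)
qed

lemma Gamma_ratio_eq_fact_div_pochhammer:
  assumes "l > 0"
  shows "Gamma (real l) * Gamma (real n + 1) / Gamma (real n + real l) = fact n / pochhammer (real l) n"
proof -
  have "Gamma (real l) > 0" "Gamma (real n + real l) > 0"
    using assms by simp_all
  moreover have "pochhammer (real l) n = Gamma (real l + real n) / Gamma (real l)"
    using assms by (intro pochhammer_Gamma) (auto simp: nonpos_Ints_def)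
  moreover have "Gamma (real n + 1) = fact n"
    using Gamma_fact[of n] by (simp add: add.commute)
  moreover have "pochhammer (real l) n > 0"
    using assms by (simp add: pochhammer_pos)
  ultimately show ?thesis
    by (simp add: field_simps add.commute)
qed

theorem corollary3p3:
  fixes lam :: nat and rho :: real and f :: "complex \<Rightarrow> complex" and n :: nat
  assumes "lam > 0" and "rho > 1"
    and "f analytic_on bernstein_region rho"
  shows "gegenbauer_coeff n (real lam) f =
    complex_of_real (Gamma (real lam) * Gamma (real n + 1) / Gamma (real n + real lam)) / (\<i> * pi) *
    (\<Sum>k<lam. complex_of_real (pochhammer (real n + 1) k * pochhammer (1 - real lam) k
                 / (pochhammer (real n + real lam + 1) k * fact k)) *
       contour_integral (bernstein_ellipse rho) (\<lambda>z. f z / (joukowski_inv z) ^ (n + 2*k + 1)))"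
proof -
  obtain T where T: "open T" "bernstein_region rho \<subseteq> T" "f holomorphic_on T"
    using assms(3) unfolding analytic_on_holomorphic by blast
  have "continuous_on {-1..1} (\<lambda>x. f (complex_of_real x))"
    using assms(2) T(2) of_real_in_bernstein_region
    by (intro continuous_on_compose2[OF holomorphic_on_imp_continuous_on[OF T(3)]] continuous_intros) auto
  note coeff = gegenbauer_coeff_eq_sin_integrals[OF assms(1) this]
  have "pochhammer (real lam) n > 0"
    using assms(1) by (simp add: pochhammer_pos)
  then show ?thesis
    unfolding coeff Gamma_ratio_eq_fact_div_pochhammer[OF assms(1)]
      contour_integral_bernstein_ellipse[OF assms(2) T] sin_sum_coeff_def
    by (simp add: sum_distrib_left field_simps)
qed

end
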